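(* Let $(X,d)$ be a compact metric space and $\mathcal{W}$ a uniformly bounded open cover of $X$. Let $\mu=\sum_{i=1}^nm_i\delta_{x_i}\in\mathrm{Viet}^{\mathrm{m}}(\mathcal{W})$ (distinct $x_i$, $m_i>0$), let $\mathcal{U}=\{U_1,\dots,U_n\}$ be pairwise disjoint open subsets of $X$ with $x_i\in U_i$ and $\bigcup_iU_i$ contained in an element of $\mathcal{W}$, let $\varepsilon>0$, and let $B(\mu)=\tilde B(\mu)\cap\mathrm{Viet}^{\mathrm{m}}(\mathcal{W})$ where $\tilde B(\mu)$ is an open Wasserstein ball centered at $\mu$ in $P(X)$. Then the multivalued map $F\colon P_{\mathcal{U}}\cap B(\mu)\to P(X)$, $F(\zeta)=\{\nu\in P(\mu,\mathcal{U},\varepsilon) : \mathrm{supp}(\nu)\subseteq\mathrm{supp}(\zeta)\}$, is lower semi-continuous.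
   Context: $P(X)$ is the space of Borel probability measures on $X$ (weak topology, equivalently Wasserstein metric). $\mathrm{Viet}^{\mathrm{m}}(\mathcal{W})\subseteq P(X)$ is the set of finitely supported probability measures whose support is contained in some element of $\mathcal{W}$. For finitely supported $\nu=\sum_jw_j\delta_{a_j}$ and $Y\subseteq X$, $\nu(Y)=\sum_{a_j\in Y}w_j$. $P_U=\{\nu\in\mathrm{Viet}^{\mathrm{m}}(\mathcal{W}):\mathrm{supp}(\nu)\cap U\ne\varnothing\}$, $P_{\mathcal{U}}=\bigcap_iP_{U_i}$, $P(\mu,\mathcal{U},\varepsilon)=\{\nu\in\mathrm{Viet}^{\mathrm{m}}(\mathcal{W}) : \mathrm{supp}(\nu)\subseteq\bigcup_iU_i,\ |\nu(U_i)-\mu(U_i)|\le\varepsilon\ \forall i\}$. A multivalued map $F\colon A\to Y$ is lower semi-continuous if for every open $S\subseteq Y$ the set $\{a\in A: F(a)\cap S\ne\varnothing\}$ is open in $A$. *)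

theory Defs
  imports "HOL-Analysis.Analysis"
begin

text \<open>Finitely supported (probability) measures on a metric space are represented
  by their weight functions \<open>'a \<Rightarrow> real\<close>.\<close>

definition fsupp :: "('a \<Rightarrow> real) \<Rightarrow> 'a set" where
  "fsupp \<nu> = {x. \<nu> x \<noteq> 0}"

definition FinP :: "'a set \<Rightarrow> ('a \<Rightarrow> real) set" where
  "FinP X = {\<nu>. (\<forall>x. 0 \<le> \<nu> x) \<and> finite (fsupp \<nu>) \<and> fsupp \<nu> \<subseteq> X
                 \<and> sum \<nu> (fsupp \<nu>) = 1}"

definition fmass :: "('a \<Rightarrow> real) \<Rightarrow> 'a set \<Rightarrow> real" where
  "fmass \<nu> Y = sum \<nu> (fsupp \<nu> \<inter> Y)"

definition VietM :: "'a set \<Rightarrow> 'a set set \<Rightarrow> ('a \<Rightarrow> real) set" where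
  "VietM X W = {\<nu> \<in> FinP X. \<exists>w\<in>W. fsupp \<nu> \<subseteq> w}"

definition coupling :: "('a \<Rightarrow> real) \<Rightarrow> ('a \<Rightarrow> real) \<Rightarrow> ('a \<times> 'a \<Rightarrow> real) \<Rightarrow> bool" where
  "coupling \<mu> \<nu> \<pi> \<longleftrightarrow> (\<forall>p. 0 \<le> \<pi> p) \<and> finite (fsupp \<pi>)
     \<and> (\<forall>x. (\<Sum>p\<in>{p\<in>fsupp \<pi>. fst p = x}. \<pi> p) = \<mu> x)
     \<and> (\<forall>y. (\<Sum>p\<in>{p\<in>fsupp \<pi>. snd p = y}. \<pi> p) = \<nu> y)"

definition wass :: "('a::metric_space \<Rightarrow> real) \<Rightarrow> ('a \<Rightarrow> real) \<Rightarrow> real" where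
  "wass \<mu> \<nu> = Inf {(\<Sum>p\<in>fsupp \<pi>. \<pi> p * dist (fst p) (snd p)) | \<pi>. coupling \<mu> \<nu> \<pi>}"

definition wopen_in :: "('a::metric_space \<Rightarrow> real) set \<Rightarrow> ('a \<Rightarrow> real) set \<Rightarrow> bool" where
  "wopen_in A S \<longleftrightarrow> S \<subseteq> A \<and>
     (\<forall>\<nu>\<in>S. \<exists>e>0. \<forall>\<nu>'\<in>A. wass \<nu> \<nu>' < e \<longrightarrow> \<nu>' \<in> S)"

text \<open>Open subsets
  of P(X) are tested through their traces on the finitely supported measures.\<close>
definition lsc_map :: "'a::metric_space set \<Rightarrow> ('a \<Rightarrow> real) set
    \<Rightarrow> (('a \<Rightarrow> real) \<Rightarrow> ('a \<Rightarrow> real) set) \<Rightarrow> bool" where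
  "lsc_map X A F \<longleftrightarrow> (\<forall>S. wopen_in (FinP X) S \<longrightarrow> wopen_in A {\<zeta>\<in>A. F \<zeta> \<inter> S \<noteq> {}})"

definition P_Ucal :: "'a set \<Rightarrow> 'a set set \<Rightarrow> (nat \<Rightarrow> 'a set) \<Rightarrow> nat \<Rightarrow> ('a \<Rightarrow> real) set" where
  "P_Ucal X W U n = {\<nu> \<in> VietM X W. \<forall>i<n. fsupp \<nu> \<inter> U i \<noteq> {}}"

definition P_mu :: "'a set \<Rightarrow> 'a set set \<Rightarrow> ('a \<Rightarrow> real) \<Rightarrow> (nat \<Rightarrow> 'a set) \<Rightarrow> nat \<Rightarrow> real
    \<Rightarrow> ('a \<Rightarrow> real) set" where
  "P_mu X W \<mu> U n \<epsilon> = {\<nu> \<in> VietM X W. fsupp \<nu> \<subseteq> (\<Union>i<n. U i)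
      \<and> (\<forall>i<n. \<bar>fmass \<nu> (U i) - fmass \<mu> (U i)\<bar> \<le> \<epsilon>)}"

end

theory Submission
  imports Defs
begin

text \<open>Let \<open>\<nu> \<in> F \<zeta>\<close>. Every atom \<open>a\<close> of \<open>\<nu>\<close> is an atom of \<open>\<zeta>\<close> of positive mass, so a
  measure \<open>\<zeta>'\<close> that is Wasserstein-close to \<open>\<zeta>\<close> must have an atom \<open>f a\<close> near \<open>a\<close>: otherwise
  transporting the mass \<open>\<zeta> a\<close> would already be too expensive. Pushing \<open>\<nu>\<close> forward along \<open>f\<close>
  moves every atom by little, hence stays close to \<open>\<nu>\<close>, and keeps every atom inside its own
  \<open>U\<^sub>i\<close> (the \<open>U\<^sub>i\<close> are open and disjoint), hence preserves the masses \<open>\<nu>(U\<^sub>i)\<close>. The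
  result lies in \<open>F \<zeta>'\<close>.\<close>

lemma coupling_product:
  assumes "\<zeta> \<in> FinP X" "\<zeta>' \<in> FinP X"
  shows "coupling \<zeta> \<zeta>' (\<lambda>p. \<zeta> (fst p) * \<zeta>' (snd p))"
proof -
  let ?A = "fsupp \<zeta>" and ?B = "fsupp \<zeta>'"
  have fin: "finite ?A" "finite ?B" and total: "sum \<zeta> ?A = 1" "sum \<zeta>' ?B = 1"
    and nn: "\<forall>x. 0 \<le> \<zeta> x" "\<forall>x. 0 \<le> \<zeta>' x"
    using assms by (auto simp: FinP_def)
  have fs: "fsupp (\<lambda>p. \<zeta> (fst p) * \<zeta>' (snd p)) = ?A \<times> ?B"
    by (auto simp: fsupp_def)
  have "(\<Sum>p\<in>{p\<in>?A \<times> ?B. fst p = x}. \<zeta> (fst p) * \<zeta>' (snd p)) = \<zeta> x" for x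
  proof (cases "x \<in> ?A")
    case True
    then have "{p\<in>?A \<times> ?B. fst p = x} = Pair x ` ?B"
      by auto
    then show ?thesis
      using total by (simp add: sum.reindex inj_on_def sum_distrib_left[symmetric])
  qed (auto simp: fsupp_def)
  moreover have "(\<Sum>p\<in>{p\<in>?A \<times> ?B. snd p = y}. \<zeta> (fst p) * \<zeta>' (snd p)) = \<zeta>' y" for y
  proof (cases "y \<in> ?B")
    case True
    then have "{p\<in>?A \<times> ?B. snd p = y} = (\<lambda>x. (x, y)) ` ?A"
      by auto
    then show ?thesis
      using total by (simp add: sum.reindex inj_on_def sum_distrib_right[symmetric])
  qed (auto simp: fsupp_def)
  ultimately show ?thesis
    unfolding coupling_def fs using fin nn by auto
qed

lemma wass_le_coupling_cost:
  assumes "coupling \<mu> \<nu> \<pi>"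
  shows "wass \<mu> \<nu> \<le> (\<Sum>p\<in>fsupp \<pi>. \<pi> p * dist (fst p) (snd p))"
proof -
  have "bdd_below {(\<Sum>p\<in>fsupp \<pi>. \<pi> p * dist (fst p) (snd p)) | \<pi>. coupling \<mu> \<nu> \<pi>}"
    by (rule bdd_belowI[where m = 0]) (auto simp: coupling_def intro!: sum_nonneg)
  then show ?thesis
    unfolding wass_def using assms by (blast intro: cInf_lower)
qed

lemma coupling_fsupp_snd:
  assumes "coupling \<mu> \<nu> \<pi>" "p \<in> fsupp \<pi>"
  shows "snd p \<in> fsupp \<nu>"
proof -
  have fin: "finite (fsupp \<pi>)" and nn: "\<forall>q. 0 \<le> \<pi> q"
    and marginal: "(\<Sum>q\<in>{q\<in>fsupp \<pi>. snd q = snd p}. \<pi> q) = \<nu> (snd p)"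
    using assms(1) by (auto simp: coupling_def)
  have "\<pi> p \<le> (\<Sum>q\<in>{q\<in>fsupp \<pi>. snd q = snd p}. \<pi> q)"
    by (rule member_le_sum) (use assms(2) fin nn in auto)
  moreover have "\<pi> p > 0"
    using assms(2) nn[rule_format, of p] by (auto simp: fsupp_def less_le)
  ultimately show ?thesis
    using marginal by (auto simp: fsupp_def)
qed

lemma wass_less_imp_near_fsupp:
  assumes "\<zeta> \<in> FinP X" "\<zeta>' \<in> FinP X" "\<zeta> a > 0" "wass \<zeta> \<zeta>' < \<zeta> a * \<delta>"
  obtains b where "b \<in> fsupp \<zeta>'" "dist a b < \<delta>"
proof (rule ccontr)
  assume far: "\<not> thesis"
  let ?C = "{(\<Sum>p\<in>fsupp \<pi>. \<pi> p * dist (fst p) (snd p)) | \<pi>. coupling \<zeta> \<zeta>' \<pi>}"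
  \<comment> \<open>Without a coupling the infimum in \<open>wass\<close> would be the junk value \<open>Inf {}\<close>.\<close>
  have "?C \<noteq> {}"
    using coupling_product[OF assms(1,2)] by blast
  then obtain \<pi> where cp: "coupling \<zeta> \<zeta>' \<pi>"
    and cheap: "(\<Sum>p\<in>fsupp \<pi>. \<pi> p * dist (fst p) (snd p)) < \<zeta> a * \<delta>"
    using cInf_lessD[of ?C] assms(4) unfolding wass_def by blast
  have fin: "finite (fsupp \<pi>)" and nn: "\<forall>p. 0 \<le> \<pi> p"
    and marginal: "(\<Sum>p\<in>{p\<in>fsupp \<pi>. fst p = a}. \<pi> p) = \<zeta> a"
    using cp unfolding coupling_def by auto
  have "\<zeta> a * \<delta> = (\<Sum>p\<in>{p\<in>fsupp \<pi>. fst p = a}. \<pi> p * \<delta>)"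
    using marginal by (simp add: sum_distrib_right[symmetric])
  also have "\<dots> \<le> (\<Sum>p\<in>{p\<in>fsupp \<pi>. fst p = a}. \<pi> p * dist (fst p) (snd p))"
  proof (rule sum_mono)
    fix p assume p: "p \<in> {p\<in>fsupp \<pi>. fst p = a}"
    then have "snd p \<in> fsupp \<zeta>'"
      using coupling_fsupp_snd[OF cp] by blast
    then have "\<not> dist a (snd p) < \<delta>"
      using that far by blast
    then show "\<pi> p * \<delta> \<le> \<pi> p * dist (fst p) (snd p)"
      using p nn[rule_format, of p] by (simp add: mult_left_mono)
  qed
  also have "\<dots> \<le> (\<Sum>p\<in>fsupp \<pi>. \<pi> p * dist (fst p) (snd p))"
    by (rule sum_mono2) (use fin nn in auto)
  finally show False
    using cheap by simp
qed

definition fpush :: "('a \<Rightarrow> real) \<Rightarrow> ('a \<Rightarrow> 'b) \<Rightarrow> 'b \<Rightarrow> real" where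
  "fpush \<nu> f b = (\<Sum>a\<in>{a\<in>fsupp \<nu>. f a = b}. \<nu> a)"

lemma fsupp_fpush: "fsupp (fpush \<nu> f) \<subseteq> f ` fsupp \<nu>"
proof -
  have "fpush \<nu> f b = 0" if "b \<notin> f ` fsupp \<nu>" for b
  proof -
    have "{a\<in>fsupp \<nu>. f a = b} = {}"
      using that by auto
    then show ?thesis
      unfolding fpush_def by (simp only: sum.empty)
  qed
  then show ?thesis
    by (auto simp: fsupp_def)
qed

lemma fmass_fpush:
  assumes "finite (fsupp \<nu>)"
  shows "fmass (fpush \<nu> f) V = fmass \<nu> (f -` V)"
proof -
  have "fmass (fpush \<nu> f) V = sum (fpush \<nu> f) (f ` fsupp \<nu> \<inter> V)"
    unfolding fmass_def
    by (rule sum.mono_neutral_left) (use fsupp_fpush[of \<nu> f] assms in \<open>auto simp: fsupp_def\<close>)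
  also have "\<dots> = (\<Sum>b\<in>f ` fsupp \<nu> \<inter> V. \<Sum>a\<in>{a\<in>fsupp \<nu> \<inter> f -` V. f a = b}. \<nu> a)"
    unfolding fpush_def by (intro sum.cong refl arg_cong2[where f = sum]) auto
  also have "\<dots> = fmass \<nu> (f -` V)"
    unfolding fmass_def by (rule sum.group) (use assms in auto)
  finally show ?thesis .
qed

lemma coupling_fpush_graph:
  assumes "\<nu> \<in> FinP X"
  shows "coupling \<nu> (fpush \<nu> f) (\<lambda>p. if snd p = f (fst p) then \<nu> (fst p) else 0)"
    (is "coupling _ _ ?\<pi>")
proof -
  let ?g = "\<lambda>a. (a, f a)"
  have fin: "finite (fsupp \<nu>)" and nn: "\<forall>a. 0 \<le> \<nu> a"
    using assms by (auto simp: FinP_def)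
  have fs: "fsupp ?\<pi> = ?g ` fsupp \<nu>"
    by (auto simp: fsupp_def)
  have marginal: "(\<Sum>p\<in>{p\<in>fsupp ?\<pi>. P p}. ?\<pi> p) = (\<Sum>a\<in>{a\<in>fsupp \<nu>. P (?g a)}. \<nu> a)" for P
  proof -
    have "{p\<in>fsupp ?\<pi>. P p} = ?g ` {a\<in>fsupp \<nu>. P (?g a)}"
      unfolding fs by auto
    then show ?thesis
      by (simp add: sum.reindex inj_on_def)
  qed
  have "(\<Sum>a\<in>{a\<in>fsupp \<nu>. a = x}. \<nu> a) = \<nu> x" for x
  proof (cases "x \<in> fsupp \<nu>")
    case True
    then have "{a\<in>fsupp \<nu>. a = x} = {x}"
      by auto
    then show ?thesis
      by simp
  qed (auto simp: fsupp_def)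
  then show ?thesis
    unfolding coupling_def marginal using fin nn by (auto simp: fs fpush_def)
qed

lemma fpush_in_FinP:
  assumes "\<nu> \<in> FinP X" "f ` fsupp \<nu> \<subseteq> X"
  shows "fpush \<nu> f \<in> FinP X"
proof -
  have fin: "finite (fsupp \<nu>)" and nn: "\<forall>x. 0 \<le> \<nu> x" and total: "sum \<nu> (fsupp \<nu>) = 1"
    using assms(1) by (auto simp: FinP_def)
  have "sum (fpush \<nu> f) (fsupp (fpush \<nu> f)) = 1"
    using fmass_fpush[OF fin, of f UNIV] total by (simp add: fmass_def)
  moreover have "finite (fsupp (fpush \<nu> f))"
    by (rule finite_subset[OF fsupp_fpush finite_imageI[OF fin]])
  moreover have "\<forall>b. 0 \<le> fpush \<nu> f b"
    unfolding fpush_def using nn by (simp add: sum_nonneg)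
  moreover have "fsupp (fpush \<nu> f) \<subseteq> X"
    using fsupp_fpush[of \<nu> f] assms(2) by blast
  ultimately show ?thesis
    unfolding FinP_def by blast
qed

lemma wass_fpush_le:
  assumes "\<nu> \<in> FinP X" "\<forall>a\<in>fsupp \<nu>. dist a (f a) \<le> d"
  shows "wass \<nu> (fpush \<nu> f) \<le> d"
proof -
  let ?\<pi> = "\<lambda>p. if snd p = f (fst p) then \<nu> (fst p) else 0"
  have nn: "\<forall>x. 0 \<le> \<nu> x" and total: "sum \<nu> (fsupp \<nu>) = 1"
    using assms(1) by (auto simp: FinP_def)
  have "fsupp ?\<pi> = (\<lambda>a. (a, f a)) ` fsupp \<nu>"
    by (auto simp: fsupp_def)
  then have "(\<Sum>p\<in>fsupp ?\<pi>. ?\<pi> p * dist (fst p) (snd p)) = (\<Sum>a\<in>fsupp \<nu>. \<nu> a * dist a (f a))"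
    by (simp add: sum.reindex inj_on_def)
  also have "\<dots> \<le> (\<Sum>a\<in>fsupp \<nu>. \<nu> a * d)"
    by (rule sum_mono) (use assms(2) nn in \<open>simp add: mult_left_mono\<close>)
  also have "\<dots> = d"
    using total by (simp add: sum_distrib_right[symmetric])
  finally show ?thesis
    using wass_le_coupling_cost[OF coupling_fpush_graph[OF assms(1), of f]] by linarith
qed

lemma fmass_fpush_eq:
  assumes "finite (fsupp \<nu>)" "\<forall>a\<in>fsupp \<nu>. f a \<in> V \<longleftrightarrow> a \<in> V"
  shows "fmass (fpush \<nu> f) V = fmass \<nu> V"
proof -
  have "fsupp \<nu> \<inter> f -` V = fsupp \<nu> \<inter> V"
    using assms(2) by auto
  then show ?thesis
    using fmass_fpush[OF assms(1), of f V] by (simp add: fmass_def)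
qed

lemma fpush_in_P_mu:
  assumes "\<nu> \<in> P_mu X W \<mu> U n \<epsilon>" "\<exists>w\<in>W. (\<Union>i<n. U i) \<subseteq> w" "f ` fsupp \<nu> \<subseteq> X"
    and "\<forall>a\<in>fsupp \<nu>. \<forall>i<n. f a \<in> U i \<longleftrightarrow> a \<in> U i"
  shows "fpush \<nu> f \<in> P_mu X W \<mu> U n \<epsilon>"
proof -
  have \<nu>: "\<nu> \<in> FinP X" "fsupp \<nu> \<subseteq> (\<Union>i<n. U i)"
    and close: "\<forall>i<n. \<bar>fmass \<nu> (U i) - fmass \<mu> (U i)\<bar> \<le> \<epsilon>"
    using assms(1) unfolding P_mu_def VietM_def by blast+
  have fin: "finite (fsupp \<nu>)"
    using \<nu>(1) by (simp add: FinP_def)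
  have supp: "fsupp (fpush \<nu> f) \<subseteq> (\<Union>i<n. U i)"
  proof
    fix b assume "b \<in> fsupp (fpush \<nu> f)"
    then obtain a where a: "a \<in> fsupp \<nu>" "b = f a"
      using fsupp_fpush[of \<nu> f] by blast
    then obtain i where "i < n" "a \<in> U i"
      using \<nu>(2) by blast
    then show "b \<in> (\<Union>i<n. U i)"
      using assms(4)[rule_format, OF a(1)] a(2) by auto
  qed
  obtain w where w: "w \<in> W" "(\<Union>i<n. U i) \<subseteq> w"
    using assms(2) by blast
  have "fsupp (fpush \<nu> f) \<subseteq> w"
    using supp w(2) by (rule order_trans)
  then have "fpush \<nu> f \<in> VietM X W"
    unfolding VietM_def using fpush_in_FinP[OF \<nu>(1) assms(3)] w(1) by blast
  moreover have "fmass (fpush \<nu> f) (U i) = fmass \<nu> (U i)" if "i < n" for i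
    by (rule fmass_fpush_eq[OF fin]) (simp add: assms(4)[rule_format] that)
  ultimately show ?thesis
    unfolding P_mu_def using supp close by simp
qed

lemma disjoint_openin_family_locally_constant:
  assumes "\<forall>i<n. openin (top_of_set X) (U i)"
    and "\<forall>i<n. \<forall>j<n. i \<noteq> j \<longrightarrow> U i \<inter> U j = {}"
    and "a \<in> (\<Union>i<n. U i)"
  shows "\<exists>\<rho>>0. \<forall>b\<in>X. dist a b < \<rho> \<longrightarrow> (\<forall>i<n. b \<in> U i \<longleftrightarrow> a \<in> U i)"
proof -
  obtain j where j: "j < n" "a \<in> U j"
    using assms(3) by blast
  then obtain \<rho> where \<rho>: "\<rho> > 0" "ball a \<rho> \<inter> X \<subseteq> U j"
    using assms(1) openin_contains_ball by metis
  have "\<forall>i<n. b \<in> U i \<longleftrightarrow> a \<in> U i" if "b \<in> X" "dist a b < \<rho>" for b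
  proof -
    have "b \<in> U j"
      using \<rho>(2) that by auto
    then show ?thesis
      using assms(2) j by blast
  qed
  then show ?thesis
    using \<rho>(1) by blast
qed

lemma wass_close_fsupp_selection:
  assumes "\<zeta> \<in> FinP X" "finite D" "D \<subseteq> fsupp \<zeta>" "\<forall>a\<in>D. \<delta> a > 0"
  shows "\<exists>e>0. \<forall>\<zeta>'\<in>FinP X. wass \<zeta> \<zeta>' < e \<longrightarrow>
           (\<exists>f. \<forall>a\<in>D. f a \<in> fsupp \<zeta>' \<and> dist a (f a) < \<delta> a)"
proof -
  define e where "e = Min (insert 1 ((\<lambda>a. \<zeta> a * \<delta> a) ` D))"
  have pos: "\<zeta> a > 0" if "a \<in> D" for a
    using assms(1,3) that by (auto simp: FinP_def fsupp_def less_le)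
  then have "e > 0"
    using assms(2,4) by (simp add: e_def)
  moreover have "\<exists>f. \<forall>a\<in>D. f a \<in> fsupp \<zeta>' \<and> dist a (f a) < \<delta> a"
    if \<zeta>': "\<zeta>' \<in> FinP X" "wass \<zeta> \<zeta>' < e" for \<zeta>'
  proof -
    have "\<exists>b. b \<in> fsupp \<zeta>' \<and> dist a b < \<delta> a" if a: "a \<in> D" for a
    proof -
      have "e \<le> \<zeta> a * \<delta> a"
        using assms(2) a by (simp add: e_def)
      then have "wass \<zeta> \<zeta>' < \<zeta> a * \<delta> a"
        using \<zeta>'(2) by linarith
      then obtain b where "b \<in> fsupp \<zeta>'" "dist a b < \<delta> a"
        by (rule wass_less_imp_near_fsupp[OF assms(1) \<zeta>'(1) pos[OF a]])
      then show ?thesis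
        by blast
    qed
    then show ?thesis
      by (rule bchoice[OF ballI])
  qed
  ultimately show ?thesis
    by blast
qed

lemma P_mu_lift_to_nearby_fsupp:
  assumes U_open: "\<forall>i<n. openin (top_of_set X) (U i)"
    and U_disjoint: "\<forall>i<n. \<forall>j<n. i \<noteq> j \<longrightarrow> U i \<inter> U j = {}"
    and U_in_W: "\<exists>w\<in>W. (\<Union>i<n. U i) \<subseteq> w"
    and \<zeta>: "\<zeta> \<in> FinP X"
    and \<nu>: "\<nu> \<in> P_mu X W \<mu> U n \<epsilon>" "fsupp \<nu> \<subseteq> fsupp \<zeta>"
    and "d > 0"
  shows "\<exists>e>0. \<forall>\<zeta>'\<in>FinP X. wass \<zeta> \<zeta>' < e \<longrightarrow>
           (\<exists>\<nu>'\<in>P_mu X W \<mu> U n \<epsilon>. fsupp \<nu>' \<subseteq> fsupp \<zeta>' \<and> wass \<nu> \<nu>' < d)"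
proof -
  have \<nu>_FinP: "\<nu> \<in> FinP X" and \<nu>_U: "fsupp \<nu> \<subseteq> (\<Union>i<n. U i)"
    using \<nu>(1) unfolding P_mu_def VietM_def by blast+
  then have fin: "finite (fsupp \<nu>)"
    by (simp add: FinP_def)
  have "\<forall>a\<in>fsupp \<nu>. \<exists>\<rho>>0. \<forall>b\<in>X. dist a b < \<rho> \<longrightarrow> (\<forall>i<n. b \<in> U i \<longleftrightarrow> a \<in> U i)"
    using disjoint_openin_family_locally_constant[OF U_open U_disjoint] \<nu>_U by blast
  from bchoice[OF this] obtain \<rho> where \<rho>: "\<forall>a\<in>fsupp \<nu>. \<rho> a > 0 \<and>
      (\<forall>b\<in>X. dist a b < \<rho> a \<longrightarrow> (\<forall>i<n. b \<in> U i \<longleftrightarrow> a \<in> U i))"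
    by blast
  \<comment> \<open>\<open>\<rho> a\<close> keeps the moved atom in its \<open>U\<^sub>i\<close>, \<open>d / 2\<close> keeps the push-forward near \<open>\<nu>\<close>.\<close>
  define \<delta> where "\<delta> a = min (\<rho> a) (d / 2)" for a
  have "\<forall>a\<in>fsupp \<nu>. \<delta> a > 0"
    using \<rho> \<open>d > 0\<close> by (simp add: \<delta>_def)
  then obtain e where "e > 0" and select: "\<forall>\<zeta>'\<in>FinP X. wass \<zeta> \<zeta>' < e \<longrightarrow>
      (\<exists>f. \<forall>a\<in>fsupp \<nu>. f a \<in> fsupp \<zeta>' \<and> dist a (f a) < \<delta> a)"
    using wass_close_fsupp_selection[OF \<zeta> fin \<nu>(2)] by blast
  have "\<exists>\<nu>'\<in>P_mu X W \<mu> U n \<epsilon>. fsupp \<nu>' \<subseteq> fsupp \<zeta>' \<and> wass \<nu> \<nu>' < d"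
    if \<zeta>': "\<zeta>' \<in> FinP X" "wass \<zeta> \<zeta>' < e" for \<zeta>'
  proof -
    obtain f where f: "\<forall>a\<in>fsupp \<nu>. f a \<in> fsupp \<zeta>' \<and> dist a (f a) < \<delta> a"
      using select \<zeta>' by blast
    have f_X: "f ` fsupp \<nu> \<subseteq> X"
      using f \<zeta>'(1) by (auto simp: FinP_def)
    have "\<forall>a\<in>fsupp \<nu>. \<forall>i<n. f a \<in> U i \<longleftrightarrow> a \<in> U i"
    proof
      fix a assume a: "a \<in> fsupp \<nu>"
      then have "f a \<in> X" "dist a (f a) < \<rho> a"
        using f f_X by (auto simp: \<delta>_def)
      then show "\<forall>i<n. f a \<in> U i \<longleftrightarrow> a \<in> U i"
        using \<rho> a by blast
    qed
    then have "fpush \<nu> f \<in> P_mu X W \<mu> U n \<epsilon>"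
      by (rule fpush_in_P_mu[OF \<nu>(1) U_in_W f_X])
    moreover have "fsupp (fpush \<nu> f) \<subseteq> fsupp \<zeta>'"
      using fsupp_fpush[of \<nu> f] f by blast
    moreover have "wass \<nu> (fpush \<nu> f) \<le> d / 2"
      by (rule wass_fpush_le[OF \<nu>_FinP]) (use f in \<open>auto simp: \<delta>_def\<close>)
    ultimately show ?thesis
      using \<open>d > 0\<close> by (intro bexI[of _ "fpush \<nu> f"]) auto
  qed
  then show ?thesis
    using \<open>e > 0\<close> by blast
qed

lemma lsc_mapI_wass:
  assumes "\<And>\<zeta>. \<zeta> \<in> A \<Longrightarrow> F \<zeta> \<subseteq> FinP X"
    and "\<And>\<zeta> \<nu> d. \<zeta> \<in> A \<Longrightarrow> \<nu> \<in> F \<zeta> \<Longrightarrow> d > 0 \<Longrightarrow>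
           \<exists>e>0. \<forall>\<zeta>'\<in>A. wass \<zeta> \<zeta>' < e \<longrightarrow> (\<exists>\<nu>'\<in>F \<zeta>'. wass \<nu> \<nu>' < d)"
  shows "lsc_map X A F"
  unfolding lsc_map_def
proof (intro allI impI)
  fix S assume "wopen_in (FinP X) S"
  then have S_open: "\<forall>\<nu>\<in>S. \<exists>d>0. \<forall>\<nu>'\<in>FinP X. wass \<nu> \<nu>' < d \<longrightarrow> \<nu>' \<in> S"
    unfolding wopen_in_def by blast
  show "wopen_in A {\<zeta>\<in>A. F \<zeta> \<inter> S \<noteq> {}}"
    unfolding wopen_in_def
  proof (intro conjI ballI)
    fix \<zeta> assume "\<zeta> \<in> {\<zeta>\<in>A. F \<zeta> \<inter> S \<noteq> {}}"
    then obtain \<nu> where \<zeta>: "\<zeta> \<in> A" and \<nu>: "\<nu> \<in> F \<zeta>" "\<nu> \<in> S"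
      by blast
    obtain d where "d > 0" and S_nbhd: "\<forall>\<nu>'\<in>FinP X. wass \<nu> \<nu>' < d \<longrightarrow> \<nu>' \<in> S"
      using S_open \<nu>(2) by blast
    obtain e where "e > 0" and lift: "\<forall>\<zeta>'\<in>A. wass \<zeta> \<zeta>' < e \<longrightarrow> (\<exists>\<nu>'\<in>F \<zeta>'. wass \<nu> \<nu>' < d)"
      using assms(2)[OF \<zeta> \<nu>(1) \<open>d > 0\<close>] by blast
    have "\<zeta>' \<in> {\<zeta>\<in>A. F \<zeta> \<inter> S \<noteq> {}}" if "\<zeta>' \<in> A" "wass \<zeta> \<zeta>' < e" for \<zeta>'
      using lift S_nbhd assms(1) that by blast
    then show "\<exists>e>0. \<forall>\<zeta>'\<in>A. wass \<zeta> \<zeta>' < e \<longrightarrow> \<zeta>' \<in> {\<zeta>\<in>A. F \<zeta> \<inter> S \<noteq> {}}"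
      using \<open>e > 0\<close> by blast
  qed blast
qed

theorem proposition4p9:
  fixes X :: "'a::metric_space set" and W :: "'a set set"
    and \<mu> :: "'a \<Rightarrow> real" and x :: "nat \<Rightarrow> 'a" and n :: nat
    and U :: "nat \<Rightarrow> 'a set" and \<epsilon> r :: real
  assumes "compact X"
    and "\<forall>w\<in>W. openin (top_of_set X) w" and "\<Union>W = X"
    and "\<exists>B. \<forall>w\<in>W. \<forall>a\<in>w. \<forall>b\<in>w. dist a b \<le> B"
    and "\<mu> \<in> VietM X W"
    and "inj_on x {..<n}" and "fsupp \<mu> = x ` {..<n}"
    and "\<forall>i<n. openin (top_of_set X) (U i)"
    and "\<forall>i<n. \<forall>j<n. i \<noteq> j \<longrightarrow> U i \<inter> U j = {}"
    and "\<forall>i<n. x i \<in> U i"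
    and "\<exists>w\<in>W. (\<Union>i<n. U i) \<subseteq> w"
    and "\<epsilon> > 0" and "r > 0"
  shows "lsc_map X (P_Ucal X W U n \<inter> {\<nu> \<in> VietM X W. wass \<mu> \<nu> < r})
           (\<lambda>\<zeta>. {\<nu> \<in> P_mu X W \<mu> U n \<epsilon>. fsupp \<nu> \<subseteq> fsupp \<zeta>})"
proof (rule lsc_mapI_wass)
  show "{\<nu> \<in> P_mu X W \<mu> U n \<epsilon>. fsupp \<nu> \<subseteq> fsupp \<zeta>} \<subseteq> FinP X" for \<zeta>
    unfolding P_mu_def VietM_def by blast
next
  let ?A = "P_Ucal X W U n \<inter> {\<nu> \<in> VietM X W. wass \<mu> \<nu> < r}"
  fix \<zeta> \<nu> and d :: real
  assume "\<zeta> \<in> ?A" "\<nu> \<in> {\<nu> \<in> P_mu X W \<mu> U n \<epsilon>. fsupp \<nu> \<subseteq> fsupp \<zeta>}" "d > 0"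
  moreover have A_FinP: "?A \<subseteq> FinP X"
    unfolding P_Ucal_def VietM_def by blast
  ultimately obtain e where "e > 0" and lift: "\<forall>\<zeta>'\<in>FinP X. wass \<zeta> \<zeta>' < e \<longrightarrow>
      (\<exists>\<nu>'\<in>P_mu X W \<mu> U n \<epsilon>. fsupp \<nu>' \<subseteq> fsupp \<zeta>' \<and> wass \<nu> \<nu>' < d)"
    using P_mu_lift_to_nearby_fsupp[OF assms(8,9,11), of \<zeta> \<nu> \<mu> \<epsilon> d] by blast
  then show "\<exists>e>0. \<forall>\<zeta>'\<in>?A. wass \<zeta> \<zeta>' < e \<longrightarrow>
      (\<exists>\<nu>'\<in>{\<nu> \<in> P_mu X W \<mu> U n \<epsilon>. fsupp \<nu> \<subseteq> fsupp \<zeta>'}. wass \<nu> \<nu>' < d)"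
    using A_FinP by blast
qed

end
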